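(* Let $R$ be a commutative ring, $L$ an $R$-module and $S\subseteq L$ a subset. Then the subset module closure $\mathrm{cl}_{S,L}$, as a pair operation on all pairs $N\subseteq M$ of $R$-modules, is functorial and residual.
   Context: For $R$-modules $N\subseteq M$, $N^{\mathrm{cl}_{S,L}}_M=\{u\in M:\ s\otimes u\in\operatorname{im}(L\otimes_R N\to L\otimes_R M)\text{ for all } s\in S\}$, the map induced by the inclusion $N\hookrightarrow M$. A pair operation $p$ (here $p(N,M)=N^{\mathrm{cl}_{S,L}}_M$) is functorial if $g(p(N,M))\subseteq p(g(N),M')$ for every $R$-linear map $g:M\to M'$ and submodule $N\subseteq M$; it is residual if $p(N,M)=\pi^{-1}(p(N/P,M/P))$ whenever $P\subseteq N\subseteq M$, where $\pi:M\to M/P$ is the quotient map. *)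

theory Defs
  imports "HOL-Algebra.Algebra"
begin

text \<open>Finite R-linear combinations of a set G of formal (coefficient) functions
  'k \<Rightarrow> 'a; the R-submodule of the free module R^('k) generated by G.\<close>
inductive_set rspan :: "('a, 'x) ring_scheme \<Rightarrow> ('k \<Rightarrow> 'a) set \<Rightarrow> ('k \<Rightarrow> 'a) set"
  for R G where
  zero: "(\<lambda>_. \<zero>\<^bsub>R\<^esub>) \<in> rspan R G"
| gen: "g \<in> G \<Longrightarrow> g \<in> rspan R G"
| add: "f \<in> rspan R G \<Longrightarrow> g \<in> rspan R G \<Longrightarrow> (\<lambda>k. f k \<oplus>\<^bsub>R\<^esub> g k) \<in> rspan R G"
| smult: "r \<in> carrier R \<Longrightarrow> f \<in> rspan R G \<Longrightarrow> (\<lambda>k. r \<otimes>\<^bsub>R\<^esub> f k) \<in> rspan R G"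

text \<open>The basis vector of the free module on pairs (l,m): the formal symbol l \<otimes> m.\<close>
definition fbasis :: "('a, 'x) ring_scheme \<Rightarrow> 'l \<Rightarrow> 'm \<Rightarrow> ('l \<times> 'm \<Rightarrow> 'a)" where
  "fbasis R l m = (\<lambda>k. if k = (l, m) then \<one>\<^bsub>R\<^esub> else \<zero>\<^bsub>R\<^esub>)"

definition fdiff :: "('a, 'x) ring_scheme \<Rightarrow> ('k \<Rightarrow> 'a) \<Rightarrow> ('k \<Rightarrow> 'a) \<Rightarrow> ('k \<Rightarrow> 'a)" where
  "fdiff R f g = (\<lambda>k. f k \<ominus>\<^bsub>R\<^esub> g k)"

definition fscale :: "('a, 'x) ring_scheme \<Rightarrow> 'a \<Rightarrow> ('k \<Rightarrow> 'a) \<Rightarrow> ('k \<Rightarrow> 'a)" where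
  "fscale R r f = (\<lambda>k. r \<otimes>\<^bsub>R\<^esub> f k)"

text \<open>The bilinearity relations in the free module on carrier L \<times> carrier M; the
  tensor product L \<otimes>_R M is the free module on carrier L \<times> carrier M modulo
  the span of these relations.\<close>
definition tensor_rels ::
  "('a, 'x) ring_scheme \<Rightarrow> ('a, 'l, 'y) module_scheme \<Rightarrow> ('a, 'm, 'z) module_scheme
     \<Rightarrow> ('l \<times> 'm \<Rightarrow> 'a) set" where
  "tensor_rels R L M =
     {fdiff R (fdiff R (fbasis R (l \<oplus>\<^bsub>L\<^esub> l') m) (fbasis R l m)) (fbasis R l' m)
        | l l' m. l \<in> carrier L \<and> l' \<in> carrier L \<and> m \<in> carrier M}
   \<union> {fdiff R (fdiff R (fbasis R l (m \<oplus>\<^bsub>M\<^esub> m')) (fbasis R l m)) (fbasis R l m')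
        | l m m'. l \<in> carrier L \<and> m \<in> carrier M \<and> m' \<in> carrier M}
   \<union> {fdiff R (fbasis R (r \<odot>\<^bsub>L\<^esub> l) m) (fscale R r (fbasis R l m))
        | r l m. r \<in> carrier R \<and> l \<in> carrier L \<and> m \<in> carrier M}
   \<union> {fdiff R (fbasis R l (r \<odot>\<^bsub>M\<^esub> m)) (fscale R r (fbasis R l m))
        | r l m. r \<in> carrier R \<and> l \<in> carrier L \<and> m \<in> carrier M}"

text \<open>For N \<subseteq> M: the element s \<otimes> u of L \<otimes>_R M lies in the image of
  L \<otimes>_R N \<rightarrow> L \<otimes>_R M. That image is the submodule generated by the classes of
  the symbols l \<otimes> n (l \<in> L, n \<in> N), so membership means that the formal symbol
  s \<otimes> u lies in (span of those symbols) + (span of the relations).\<close>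
definition tensor_in_image ::
  "('a, 'x) ring_scheme \<Rightarrow> ('a, 'l, 'y) module_scheme \<Rightarrow> 'm set \<Rightarrow> ('a, 'm, 'z) module_scheme
     \<Rightarrow> 'l \<Rightarrow> 'm \<Rightarrow> bool" where
  "tensor_in_image R L N M s u \<longleftrightarrow>
     fbasis R s u \<in> rspan R ({fbasis R l n | l n. l \<in> carrier L \<and> n \<in> N} \<union> tensor_rels R L M)"

definition subset_cl ::
  "('a, 'x) ring_scheme \<Rightarrow> ('a, 'l, 'y) module_scheme \<Rightarrow> 'l set \<Rightarrow> 'm set
     \<Rightarrow> ('a, 'm, 'z) module_scheme \<Rightarrow> 'm set" where
  "subset_cl R L S N M = {u \<in> carrier M. \<forall>s \<in> S. tensor_in_image R L N M s u}"

definition rlinear ::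
  "('a, 'x) ring_scheme \<Rightarrow> ('a, 'm, 'y) module_scheme \<Rightarrow> ('a, 'n, 'z) module_scheme
     \<Rightarrow> ('m \<Rightarrow> 'n) \<Rightarrow> bool" where
  "rlinear R M M' g \<longleftrightarrow> g \<in> carrier M \<rightarrow> carrier M'
     \<and> (\<forall>x \<in> carrier M. \<forall>y \<in> carrier M. g (x \<oplus>\<^bsub>M\<^esub> y) = g x \<oplus>\<^bsub>M'\<^esub> g y)
     \<and> (\<forall>r \<in> carrier R. \<forall>x \<in> carrier M. g (r \<odot>\<^bsub>M\<^esub> x) = r \<odot>\<^bsub>M'\<^esub> g x)"

text \<open>Quotient module M/P (elements are additive cosets P +> x); only the
  module structure (carrier, zero, add, smult) is meaningful.\<close>
definition quot_module ::
  "('a, 'x) ring_scheme \<Rightarrow> ('a, 'm, 'z) module_scheme \<Rightarrow> 'm set \<Rightarrow> ('a, 'm set) module" where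
  "quot_module R M P =
     \<lparr>carrier = a_rcosets\<^bsub>M\<^esub> P, monoid.mult = (\<lambda>_ _. P), monoid.one = P, ring.zero = P,
      ring.add = set_add M,
      module.smult = (\<lambda>r C. \<Union>x\<in>C. a_r_coset M P (r \<odot>\<^bsub>M\<^esub> x))\<rparr>"

end

theory Submission
  imports Defs
begin

text \<open>
  Membership of \<open>s \<otimes> u\<close> in the image of \<open>L \<otimes> N \<rightarrow> L \<otimes> M\<close> is witnessed by a finite
  \<open>R\<close>-linear combination of symbols \<open>l \<otimes> n\<close> (\<open>n \<in> N\<close>) and of bilinearity relations.
  Pushing coefficients forward along \<open>id \<times> g\<close> is \<open>R\<close>-linear and, for \<open>g\<close> linear, sends
  these generators to the corresponding generators for \<open>g(N) \<subseteq> M'\<close>; this gives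
  functoriality and, applied to \<open>M \<rightarrow> M/P\<close>, one half of residuality. For the other half
  push coefficients along a choice of coset representatives \<open>M/P \<rightarrow> M\<close>: it is not additive,
  but two representatives of the same coset differ by some \<open>p \<in> P \<subseteq> N\<close>, and
  \<open>l \<otimes> (p + a) - l \<otimes> a\<close> lies in the span because \<open>l \<otimes> p\<close> does.
\<close>

definition free_vec :: "('a, 'x) ring_scheme \<Rightarrow> ('k \<Rightarrow> 'a) \<Rightarrow> bool" where
  "free_vec R f \<longleftrightarrow> (\<forall>k. f k \<in> carrier R) \<and> finite {k. f k \<noteq> \<zero>\<^bsub>R\<^esub>}"

definition fpush :: "('a, 'x) ring_scheme \<Rightarrow> ('k \<Rightarrow> 'j) \<Rightarrow> ('k \<Rightarrow> 'a) \<Rightarrow> ('j \<Rightarrow> 'a)" where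
  "fpush R \<psi> f = (\<lambda>j. finsum R f {k. \<psi> k = j \<and> f k \<noteq> \<zero>\<^bsub>R\<^esub>})"

context ring
begin

lemma fdiff_eq_add_smult:
  assumes "\<And>k. f k \<in> carrier R" "\<And>k. g k \<in> carrier R"
  shows "fdiff R f g = (\<lambda>k. f k \<oplus> (\<ominus> \<one>) \<otimes> g k)"
  using assms by (simp add: fdiff_def fun_eq_iff a_minus_def l_minus)

lemma fdiff_split:
  assumes "\<And>k. a k \<in> carrier R" "\<And>k. c k \<in> carrier R" "\<And>k. d k \<in> carrier R"
  shows "fdiff R a c = (\<lambda>k. fdiff R a d k \<oplus> fdiff R d c k)"
  using assms by (simp add: fdiff_def fun_eq_iff) algebra

lemma fdiff_fdiff_split:
  assumes "\<And>k. a k \<in> carrier R" "\<And>k. b k \<in> carrier R" "\<And>k. c k \<in> carrier R"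
    "\<And>k. d k \<in> carrier R"
  shows "fdiff R (fdiff R a b) c = (\<lambda>k. fdiff R a d k \<oplus> fdiff R (fdiff R d b) c k)"
  using assms by (simp add: fdiff_def fun_eq_iff) algebra

lemma fdiff_add_cancel:
  assumes "\<And>k. a k \<in> carrier R" "\<And>k. b k \<in> carrier R" "\<And>k. c k \<in> carrier R"
  shows "fdiff R a c = (\<lambda>k. fdiff R (fdiff R a b) c k \<oplus> b k)"
  using assms by (simp add: fdiff_def fun_eq_iff) algebra

lemma fbasis_closed: "fbasis R l m k \<in> carrier R"
  by (simp add: fbasis_def)

lemma free_vec_add: "free_vec R f \<Longrightarrow> free_vec R g \<Longrightarrow> free_vec R (\<lambda>k. f k \<oplus> g k)"
  unfolding free_vec_def
  by (auto intro: finite_subset[of _ "{k. f k \<noteq> \<zero>} \<union> {k. g k \<noteq> \<zero>}"])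

lemma free_vec_smult: "r \<in> carrier R \<Longrightarrow> free_vec R f \<Longrightarrow> free_vec R (\<lambda>k. r \<otimes> f k)"
  unfolding free_vec_def by (auto intro: finite_subset[of _ "{k. f k \<noteq> \<zero>}"])

lemma free_vec_fbasis: "free_vec R (fbasis R l m)"
  unfolding free_vec_def fbasis_def by (auto intro: finite_subset[of _ "{(l, m)}"])

lemma free_vec_fdiff: "free_vec R f \<Longrightarrow> free_vec R g \<Longrightarrow> free_vec R (fdiff R f g)"
  by (simp add: fdiff_eq_add_smult free_vec_def[of R f] free_vec_def[of R g] free_vec_add free_vec_smult)

lemma free_vec_fscale: "r \<in> carrier R \<Longrightarrow> free_vec R f \<Longrightarrow> free_vec R (fscale R r f)"
  unfolding fscale_def by (rule free_vec_smult)

lemma free_vec_rspan: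
  assumes "\<And>h. h \<in> G \<Longrightarrow> free_vec R h" and "f \<in> rspan R G"
  shows "free_vec R f"
  using assms(2)
  by induction (auto simp: free_vec_def[of R "\<lambda>_. \<zero>"] intro: assms(1) free_vec_add free_vec_smult)

lemma rspan_fdiff:
  assumes "f \<in> rspan R G" "g \<in> rspan R G" "\<And>k. f k \<in> carrier R" "\<And>k. g k \<in> carrier R"
  shows "fdiff R f g \<in> rspan R G"
  using assms by (simp add: fdiff_eq_add_smult rspan.intros)

lemma rspan_fdiff_cancel:
  assumes a: "a \<in> rspan R G" and ac: "fdiff R a c \<in> rspan R G"
    and "\<And>k. a k \<in> carrier R" "\<And>k. c k \<in> carrier R"
  shows "c \<in> rspan R G"
proof -
  have "fdiff R a (fdiff R a c) \<in> rspan R G"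
    by (rule rspan_fdiff[OF a ac]) (simp_all add: fdiff_def assms)
  moreover have "fdiff R a (fdiff R a c) = c"
    using assms by (simp add: fdiff_def fun_eq_iff) algebra
  ultimately show ?thesis by simp
qed

lemma fpush_eq_finsum:
  assumes "\<And>k. f k \<in> carrier R" "finite B"
    and "{k. \<psi> k = j \<and> f k \<noteq> \<zero>} \<subseteq> B" "B \<subseteq> {k. \<psi> k = j}"
  shows "fpush R \<psi> f j = finsum R f B"
  unfolding fpush_def
  by (rule add.finprod_mono_neutral_cong_left) (use assms in auto)

lemma fpush_add:
  assumes f: "free_vec R f" and g: "free_vec R g"
  shows "fpush R \<psi> (\<lambda>k. f k \<oplus> g k) = (\<lambda>j. fpush R \<psi> f j \<oplus> fpush R \<psi> g j)"
proof
  fix j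
  let ?B = "{k. \<psi> k = j \<and> (f k \<noteq> \<zero> \<or> g k \<noteq> \<zero>)}"
  have fin: "finite ?B"
    using f g unfolding free_vec_def
    by (auto intro: finite_subset[of _ "{k. f k \<noteq> \<zero>} \<union> {k. g k \<noteq> \<zero>}"])
  have "fpush R \<psi> (\<lambda>k. f k \<oplus> g k) j = (\<Oplus>k\<in>?B. f k \<oplus> g k)"
    using f g fin unfolding free_vec_def by (intro fpush_eq_finsum) auto
  also have "\<dots> = finsum R f ?B \<oplus> finsum R g ?B"
    using f g unfolding free_vec_def by (intro finsum_addf) auto
  also have "\<dots> = fpush R \<psi> f j \<oplus> fpush R \<psi> g j"
    using f g fin unfolding free_vec_def by (subst (1 2) fpush_eq_finsum[of _ ?B]) auto
  finally show "fpush R \<psi> (\<lambda>k. f k \<oplus> g k) j = fpush R \<psi> f j \<oplus> fpush R \<psi> g j" .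
qed

lemma fpush_smult:
  assumes r: "r \<in> carrier R" and f: "free_vec R f"
  shows "fpush R \<psi> (\<lambda>k. r \<otimes> f k) = (\<lambda>j. r \<otimes> fpush R \<psi> f j)"
proof
  fix j
  let ?B = "{k. \<psi> k = j \<and> f k \<noteq> \<zero>}"
  have fin: "finite ?B"
    using f unfolding free_vec_def by (auto intro: finite_subset[of _ "{k. f k \<noteq> \<zero>}"])
  have "fpush R \<psi> (\<lambda>k. r \<otimes> f k) j = (\<Oplus>k\<in>?B. r \<otimes> f k)"
    using r f fin unfolding free_vec_def by (intro fpush_eq_finsum) auto
  also have "\<dots> = r \<otimes> fpush R \<psi> f j"
    using r f fin unfolding free_vec_def fpush_def by (intro finsum_rdistr[symmetric]) auto
  finally show "fpush R \<psi> (\<lambda>k. r \<otimes> f k) j = r \<otimes> fpush R \<psi> f j" .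
qed

lemma fpush_zero: "fpush R \<psi> (\<lambda>_. \<zero>) = (\<lambda>_. \<zero>)"
  by (simp add: fpush_def)

lemma fpush_closed: "free_vec R f \<Longrightarrow> fpush R \<psi> f j \<in> carrier R"
  unfolding fpush_def free_vec_def by (auto intro: finsum_closed)

lemma fpush_fdiff:
  assumes "free_vec R f" "free_vec R g"
  shows "fpush R \<psi> (fdiff R f g) = fdiff R (fpush R \<psi> f) (fpush R \<psi> g)"
  using assms
  by (simp add: fdiff_eq_add_smult free_vec_def[of R f] free_vec_def[of R g] fpush_closed
      fpush_add fpush_smult free_vec_smult)

lemma fpush_fscale:
  "r \<in> carrier R \<Longrightarrow> free_vec R f \<Longrightarrow> fpush R \<psi> (fscale R r f) = fscale R r (fpush R \<psi> f)"
  unfolding fscale_def by (rule fpush_smult)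

lemma fpush_fbasis: "fpush R (map_prod id \<phi>) (fbasis R l m) = fbasis R l (\<phi> m)"
proof
  fix k
  have "{k'. map_prod id \<phi> k' = k \<and> fbasis R l m k' \<noteq> \<zero>} =
      (if k = (l, \<phi> m) \<and> \<one> \<noteq> \<zero> then {(l, m)} else {})"
    by (auto simp: fbasis_def)
  then show "fpush R (map_prod id \<phi>) (fbasis R l m) k = fbasis R l (\<phi> m) k"
    by (auto simp: fpush_def fbasis_def)
qed

lemma fpush_rspan:
  assumes "\<And>h. h \<in> G \<Longrightarrow> free_vec R h" "\<And>h. h \<in> G \<Longrightarrow> fpush R \<psi> h \<in> rspan R H"
    and "f \<in> rspan R G"
  shows "fpush R \<psi> f \<in> rspan R H"
  using assms(3)
proof induction
  case zero
  then show ?case by (simp add: fpush_zero rspan.zero)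
next
  case (gen g)
  then show ?case by (rule assms(2))
next
  case (add f g)
  moreover have "free_vec R f" "free_vec R g"
    using add.hyps by (auto intro: free_vec_rspan assms(1))
  ultimately show ?case by (simp add: fpush_add rspan.add)
next
  case (smult r f)
  moreover have "free_vec R f"
    using smult.hyps by (auto intro: free_vec_rspan assms(1))
  ultimately show ?case by (simp add: fpush_smult rspan.smult)
qed

end

definition tensor_image_gens ::
  "('a, 'x) ring_scheme \<Rightarrow> ('a, 'l, 'y) module_scheme \<Rightarrow> 'm set \<Rightarrow> ('a, 'm, 'z) module_scheme
     \<Rightarrow> ('l \<times> 'm \<Rightarrow> 'a) set" where
  "tensor_image_gens R L N M = {fbasis R l n | l n. l \<in> carrier L \<and> n \<in> N} \<union> tensor_rels R L M"

lemma tensor_in_image_iff: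
  "tensor_in_image R L N M s u \<longleftrightarrow> fbasis R s u \<in> rspan R (tensor_image_gens R L N M)"
  by (simp add: tensor_in_image_def tensor_image_gens_def)

context ring
begin

lemma free_vec_tensor_image_gens: "h \<in> tensor_image_gens R L N M \<Longrightarrow> free_vec R h"
  unfolding tensor_image_gens_def tensor_rels_def
  by (auto intro!: free_vec_fdiff free_vec_fscale free_vec_fbasis)

lemma tensor_image_gensE:
  assumes "h \<in> tensor_image_gens R L N M"
  obtains (gen) l n where "h = fbasis R l n" "l \<in> carrier L" "n \<in> N"
  | (rel) "h \<in> tensor_rels R L M"
  using assms unfolding tensor_image_gens_def by blast

lemma tensor_relsE:
  assumes "h \<in> tensor_rels R L M"
  obtains (add_left) l l' m where
      "h = fdiff R (fdiff R (fbasis R (l \<oplus>\<^bsub>L\<^esub> l') m) (fbasis R l m)) (fbasis R l' m)"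
      "l \<in> carrier L" "l' \<in> carrier L" "m \<in> carrier M"
  | (add_right) l m m' where
      "h = fdiff R (fdiff R (fbasis R l (m \<oplus>\<^bsub>M\<^esub> m')) (fbasis R l m)) (fbasis R l m')"
      "l \<in> carrier L" "m \<in> carrier M" "m' \<in> carrier M"
  | (smult_left) r l m where "h = fdiff R (fbasis R (r \<odot>\<^bsub>L\<^esub> l) m) (fscale R r (fbasis R l m))"
      "r \<in> carrier R" "l \<in> carrier L" "m \<in> carrier M"
  | (smult_right) r l m where "h = fdiff R (fbasis R l (r \<odot>\<^bsub>M\<^esub> m)) (fscale R r (fbasis R l m))"
      "r \<in> carrier R" "l \<in> carrier L" "m \<in> carrier M"
  using assms unfolding tensor_rels_def by blast

lemma tensor_image_gensI:
  "l \<in> carrier L \<Longrightarrow> n \<in> N \<Longrightarrow> fbasis R l n \<in> tensor_image_gens R L N M"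
  "h \<in> tensor_rels R L M \<Longrightarrow> h \<in> tensor_image_gens R L N M"
  unfolding tensor_image_gens_def by blast+

lemma fpush_tensor_image_gens:
  assumes g: "rlinear R M M' g" and h: "h \<in> tensor_image_gens R L N M"
  shows "fpush R (map_prod id g) h \<in> tensor_image_gens R L (g ` N) M'"
proof -
  have closed: "\<And>x. x \<in> carrier M \<Longrightarrow> g x \<in> carrier M'"
    and add: "\<And>x y. x \<in> carrier M \<Longrightarrow> y \<in> carrier M \<Longrightarrow> g (x \<oplus>\<^bsub>M\<^esub> y) = g x \<oplus>\<^bsub>M'\<^esub> g y"
    and smult: "\<And>r x. r \<in> carrier R \<Longrightarrow> x \<in> carrier M \<Longrightarrow> g (r \<odot>\<^bsub>M\<^esub> x) = r \<odot>\<^bsub>M'\<^esub> g x"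
    using g by (auto simp: rlinear_def)
  note push_simps = fpush_fdiff fpush_fscale fpush_fbasis free_vec_fdiff free_vec_fscale free_vec_fbasis
  from h show ?thesis
  proof (cases rule: tensor_image_gensE)
    case gen
    then show ?thesis by (simp add: fpush_fbasis tensor_image_gensI)
  next
    case rel
    then show ?thesis
      by (cases rule: tensor_relsE)
         (simp add: push_simps add smult, intro tensor_image_gensI(2),
          unfold tensor_rels_def, use closed in blast)+
  qed
qed

lemma tensor_in_image_map:
  assumes g: "rlinear R M M' g" and u: "tensor_in_image R L N M s u"
  shows "tensor_in_image R L (g ` N) M' s (g u)"
proof -
  have "fpush R (map_prod id g) (fbasis R s u) \<in> rspan R (tensor_image_gens R L (g ` N) M')"
    using u unfolding tensor_in_image_iff
  proof (rule fpush_rspan[rotated 2])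
    fix h assume "h \<in> tensor_image_gens R L N M"
    then show "free_vec R h" "fpush R (map_prod id g) h \<in> rspan R (tensor_image_gens R L (g ` N) M')"
      by (auto intro: free_vec_tensor_image_gens rspan.gen fpush_tensor_image_gens[OF g])
  qed
  then show ?thesis
    by (simp add: tensor_in_image_iff fpush_fbasis)
qed

lemma subset_cl_image:
  assumes g: "rlinear R M M' g"
  shows "g ` subset_cl R L S N M \<subseteq> subset_cl R L S (g ` N) M'"
proof
  fix v assume "v \<in> g ` subset_cl R L S N M"
  then obtain u where "v = g u" "u \<in> carrier M" "\<forall>s\<in>S. tensor_in_image R L N M s u"
    unfolding subset_cl_def by blast
  moreover have "g u \<in> carrier M'"
    using g \<open>u \<in> carrier M\<close> by (auto simp: rlinear_def)
  ultimately show "v \<in> subset_cl R L S (g ` N) M'"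
    unfolding subset_cl_def by (auto intro: tensor_in_image_map[OF g])
qed

lemma fdiff_fbasis_shift:
  assumes "N \<subseteq> carrier M" "p \<in> N" "a \<in> carrier M" "l \<in> carrier L"
  shows "fdiff R (fbasis R l (p \<oplus>\<^bsub>M\<^esub> a)) (fbasis R l a) \<in> rspan R (tensor_image_gens R L N M)"
proof -
  have "fdiff R (fdiff R (fbasis R l (p \<oplus>\<^bsub>M\<^esub> a)) (fbasis R l p)) (fbasis R l a) \<in> tensor_rels R L M"
    using assms unfolding tensor_rels_def by blast
  moreover have "fbasis R l p \<in> tensor_image_gens R L N M"
    using assms by (intro tensor_image_gensI)
  ultimately show ?thesis
    by (subst fdiff_add_cancel[where b = "fbasis R l p"])
       (simp_all add: fbasis_closed rspan.add rspan.gen tensor_image_gensI(2))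
qed

end

definition coset_rep :: "'m set \<Rightarrow> 'm" where
  "coset_rep C = (SOME x. x \<in> C)"

lemma submodule_abelian_subgroup: "module R M \<Longrightarrow> submodule P R M \<Longrightarrow> abelian_subgroup P M"
  by (intro abelian_subgroupI3 additive_subgroup.intro submodule.axioms(1))
     (auto intro: module.axioms(2))

lemma coset_smult:
  fixes M (structure)
  assumes M: "module R M" and P: "submodule P R M" and "x \<in> carrier M" "r \<in> carrier R"
  shows "(\<Union>y\<in>P +> x. P +> (r \<odot> y)) = P +> (r \<odot> x)"
proof -
  interpret module R M by fact
  interpret abelian_subgroup P M by (rule submodule_abelian_subgroup) fact+
  have "P +> (r \<odot> y) = P +> (r \<odot> x)" if y: "y \<in> P +> x" for y
  proof -
    obtain p where p: "p \<in> P" "y = p \<oplus> x"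
      using y by (auto simp: a_r_coset_def')
    then have "r \<odot> y = r \<odot> p \<oplus> r \<odot> x"
      using assms a_subset by (auto intro: smult_r_distr)
    moreover have "r \<odot> p \<in> P"
      using P assms(4) p(1) by (rule submodule.smult_closed)
    ultimately have "r \<odot> y \<in> P +> (r \<odot> x)"
      by (auto simp: a_r_coset_def')
    then show ?thesis
      using assms by (intro a_repr_independence'[symmetric]) auto
  qed
  moreover have "x \<in> P +> x"
    using assms(3) by (rule a_rcos_self)
  ultimately show ?thesis by blast
qed

lemma rlinear_coset_map:
  fixes M (structure)
  assumes M: "module R M" and P: "submodule P R M"
  shows "rlinear R M (quot_module R M P) (\<lambda>x. P +> x)"
proof -
  interpret abelian_subgroup P M by (rule submodule_abelian_subgroup) fact+
  show ?thesis
    unfolding rlinear_def quot_module_def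
    by (auto simp: A_RCOSETS_def' a_rcos_sum coset_smult[OF M P])
qed

lemma coset_rep_coset:
  fixes M (structure)
  assumes "module R M" "submodule P R M" "x \<in> carrier M"
  shows "\<exists>p\<in>P. coset_rep (P +> x) = p \<oplus> x"
proof -
  interpret abelian_subgroup P M by (rule submodule_abelian_subgroup) fact+
  have "coset_rep (P +> x) \<in> P +> x"
    unfolding coset_rep_def using a_rcos_self[OF assms(3)] by (rule someI)
  then show ?thesis by (auto simp: a_r_coset_def')
qed

lemma coset_rep_rcosets:
  fixes M (structure)
  assumes "module R M" "submodule P R M" "C \<in> a_rcosets P"
  shows "coset_rep C \<in> carrier M" "C = P +> coset_rep C"
proof -
  interpret abelian_subgroup P M by (rule submodule_abelian_subgroup) fact+
  obtain x where x: "x \<in> carrier M" "C = P +> x"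
    using assms(3) by (auto simp: A_RCOSETS_def')
  then have "coset_rep C \<in> C"
    unfolding coset_rep_def using a_rcos_self[OF x(1)] by (intro someI) simp
  with x show "coset_rep C \<in> carrier M" "C = P +> coset_rep C"
    using a_elemrcos_carrier a_repr_independence' by auto
qed

lemma quot_module_simps:
  "carrier (quot_module R M P) = a_rcosets\<^bsub>M\<^esub> P"
  "C \<oplus>\<^bsub>quot_module R M P\<^esub> C' = C <+>\<^bsub>M\<^esub> C'"
  "r \<odot>\<^bsub>quot_module R M P\<^esub> C = (\<Union>x\<in>C. P +>\<^bsub>M\<^esub> (r \<odot>\<^bsub>M\<^esub> x))"
  by (simp_all add: quot_module_def)

lemma fdiff_fbasis_coset_rep:
  fixes M (structure)
  assumes M: "module R M" and P: "submodule P R M" and N: "submodule N R M" and "P \<subseteq> N"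
    and x: "x \<in> carrier M" and l: "l \<in> carrier L"
  shows "fdiff R (fbasis R l (coset_rep (P +> x))) (fbasis R l x) \<in> rspan R (tensor_image_gens R L N M)"
proof -
  interpret module R M by fact
  obtain p where "p \<in> P" "coset_rep (P +> x) = p \<oplus> x"
    using coset_rep_coset[OF M P x] by blast
  then show ?thesis
    using x l submoduleE(1)[OF N] \<open>P \<subseteq> N\<close> by (auto intro: fdiff_fbasis_shift)
qed

lemma fpush_coset_rep_tensor_rels:
  fixes M (structure)
  assumes M: "module R M" and P: "submodule P R M" and N: "submodule N R M" and PN: "P \<subseteq> N"
    and h: "h \<in> tensor_rels R L (quot_module R M P)"
  shows "fpush R (map_prod id coset_rep) h \<in> rspan R (tensor_image_gens R L N M)"
    (is "_ \<in> ?T")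
proof -
  interpret module R M by fact
  interpret abelian_subgroup P M by (rule submodule_abelian_subgroup) fact+
  have rep: "coset_rep C \<in> carrier M" "C = P +> coset_rep C" if "C \<in> a_rcosets P" for C
    using coset_rep_rcosets[OF M P that] by auto
  have rel: "h' \<in> ?T" if "h' \<in> tensor_rels R L M" for h'
    using that by (intro rspan.gen tensor_image_gensI(2))
  note shift = fdiff_fbasis_coset_rep[OF M P N PN]
  note push_simps = fpush_fdiff fpush_fscale fpush_fbasis free_vec_fdiff free_vec_fscale free_vec_fbasis
  from h show ?thesis
  proof (cases rule: tensor_relsE)
    case (add_left l l' C)
    then show ?thesis
      unfolding quot_module_simps
      by (simp add: push_simps, intro rel) (unfold tensor_rels_def, use rep in blast)
  next
    case (add_right l C C')
    define x y where "x = coset_rep C" and "y = coset_rep C'"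
    have xy: "x \<in> carrier M" "y \<in> carrier M" "C <+> C' = P +> (x \<oplus> y)"
      using add_right rep unfolding x_def y_def quot_module_simps by (metis a_rcos_sum)+
    have "fpush R (map_prod id coset_rep) h =
        fdiff R (fdiff R (fbasis R l (coset_rep (P +> (x \<oplus> y)))) (fbasis R l x)) (fbasis R l y)"
      using add_right xy by (simp add: push_simps quot_module_simps x_def y_def)
    also have "\<dots> = (\<lambda>k. fdiff R (fbasis R l (coset_rep (P +> (x \<oplus> y)))) (fbasis R l (x \<oplus> y)) k
        \<oplus>\<^bsub>R\<^esub> fdiff R (fdiff R (fbasis R l (x \<oplus> y)) (fbasis R l x)) (fbasis R l y) k)"
      by (rule fdiff_fdiff_split) (simp_all add: fbasis_closed)
    also have "\<dots> \<in> ?T"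
      using add_right xy by (intro rspan.add shift rel) (auto simp: tensor_rels_def)
    finally show ?thesis .
  next
    case (smult_left r l C)
    then show ?thesis
      unfolding quot_module_simps
      by (simp add: push_simps, intro rel) (unfold tensor_rels_def, use rep in blast)
  next
    case (smult_right r l C)
    define x where "x = coset_rep C"
    have x: "x \<in> carrier M" "r \<odot>\<^bsub>quot_module R M P\<^esub> C = P +> (r \<odot> x)"
      using smult_right rep coset_smult[OF M P] unfolding x_def quot_module_simps by metis+
    have "fpush R (map_prod id coset_rep) h =
        fdiff R (fbasis R l (coset_rep (P +> (r \<odot> x)))) (fscale R r (fbasis R l x))"
      using smult_right x by (simp add: push_simps x_def)
    also have "\<dots> = (\<lambda>k. fdiff R (fbasis R l (coset_rep (P +> (r \<odot> x)))) (fbasis R l (r \<odot> x)) k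
        \<oplus>\<^bsub>R\<^esub> fdiff R (fbasis R l (r \<odot> x)) (fscale R r (fbasis R l x)) k)"
      using smult_right by (intro fdiff_split) (simp_all add: fbasis_closed fscale_def)
    also have "\<dots> \<in> ?T"
      using smult_right x by (intro rspan.add shift rel) (auto simp: tensor_rels_def)
    finally show ?thesis .
  qed
qed

lemma fpush_coset_rep_tensor_image_gens:
  fixes M (structure)
  assumes M: "module R M" and P: "submodule P R M" and N: "submodule N R M" and PN: "P \<subseteq> N"
    and h: "h \<in> tensor_image_gens R L ((\<lambda>n. P +> n) ` N) (quot_module R M P)"
  shows "fpush R (map_prod id coset_rep) h \<in> rspan R (tensor_image_gens R L N M)"
proof -
  interpret module R M by fact
  from h show ?thesis
  proof (cases rule: tensor_image_gensE)
    case (gen l C)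
    then obtain n where n: "n \<in> N" "C = P +> n" by blast
    then obtain p where "p \<in> P" "coset_rep C = p \<oplus> n"
      using coset_rep_coset[OF M P] submoduleE(1)[OF N] by blast
    then have "coset_rep C \<in> N"
      using n PN N by (auto intro: submoduleE(5))
    then show ?thesis
      using gen by (simp add: fpush_fbasis rspan.gen tensor_image_gensI(1))
  next
    case rel
    then show ?thesis by (rule fpush_coset_rep_tensor_rels[OF M P N PN])
  qed
qed

lemma tensor_in_image_of_quotient:
  fixes M (structure)
  assumes M: "module R M" and P: "submodule P R M" and N: "submodule N R M" and PN: "P \<subseteq> N"
    and s: "s \<in> carrier L" and u: "u \<in> carrier M"
    and su: "tensor_in_image R L ((\<lambda>n. P +> n) ` N) (quot_module R M P) s (P +> u)"
  shows "tensor_in_image R L N M s u"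
proof -
  interpret module R M by fact
  have "fpush R (map_prod id coset_rep) (fbasis R s (P +> u)) \<in> rspan R (tensor_image_gens R L N M)"
    using su unfolding tensor_in_image_iff
  proof (rule fpush_rspan[rotated 2])
    fix h assume h: "h \<in> tensor_image_gens R L ((\<lambda>n. P +> n) ` N) (quot_module R M P)"
    show "free_vec R h"
      using h by (rule free_vec_tensor_image_gens)
    show "fpush R (map_prod id coset_rep) h \<in> rspan R (tensor_image_gens R L N M)"
      using M P N PN h by (rule fpush_coset_rep_tensor_image_gens)
  qed
  then have "fbasis R s (coset_rep (P +> u)) \<in> rspan R (tensor_image_gens R L N M)"
    by (simp add: fpush_fbasis)
  moreover have "fdiff R (fbasis R s (coset_rep (P +> u))) (fbasis R s u) \<in> rspan R (tensor_image_gens R L N M)"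
    using M P N PN u s by (rule fdiff_fbasis_coset_rep)
  ultimately show ?thesis
    unfolding tensor_in_image_iff by (rule rspan_fdiff_cancel) (simp_all add: fbasis_closed)
qed

lemma subset_cl_residual:
  fixes M (structure)
  assumes M: "module R M" and P: "submodule P R M" and N: "submodule N R M" and PN: "P \<subseteq> N"
    and S: "S \<subseteq> carrier L"
  shows "subset_cl R L S N M =
    {x \<in> carrier M. P +> x \<in> subset_cl R L S ((\<lambda>n. P +> n) ` N) (quot_module R M P)}"
proof -
  interpret module R M by fact
  have "(\<lambda>x. P +> x) ` subset_cl R L S N M \<subseteq> subset_cl R L S ((\<lambda>n. P +> n) ` N) (quot_module R M P)"
    by (rule subset_cl_image[OF rlinear_coset_map[OF M P]])
  moreover have "subset_cl R L S N M \<subseteq> carrier M"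
    by (auto simp: subset_cl_def)
  moreover have "x \<in> subset_cl R L S N M"
    if "x \<in> carrier M" "P +> x \<in> subset_cl R L S ((\<lambda>n. P +> n) ` N) (quot_module R M P)" for x
    using that S unfolding subset_cl_def by (blast intro: tensor_in_image_of_quotient[OF M P N PN])
  ultimately show ?thesis by blast
qed

theorem proposition7p4:
  fixes R :: "('a, 'x) ring_scheme" and L :: "('a, 'l, 'y) module_scheme" and S :: "'l set"
  assumes "cring R" and "module R L" and "S \<subseteq> carrier L"
  shows "(\<forall>(M :: ('a, 'm, 'z) module_scheme) (M' :: ('a, 'n, 'w) module_scheme) g N.
            module R M \<and> module R M' \<and> rlinear R M M' g \<and> submodule N R M \<longrightarrow>
            g ` subset_cl R L S N M \<subseteq> subset_cl R L S (g ` N) M')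
       \<and> (\<forall>(M :: ('a, 'm, 'z) module_scheme) N P.
            module R M \<and> submodule P R M \<and> submodule N R M \<and> P \<subseteq> N \<longrightarrow>
            subset_cl R L S N M =
              {x \<in> carrier M. P +>\<^bsub>M\<^esub> x \<in>
                 subset_cl R L S ((\<lambda>n. P +>\<^bsub>M\<^esub> n) ` N) (quot_module R M P)})"
proof -
  interpret cring R by fact
  show ?thesis
    using subset_cl_image subset_cl_residual[OF _ _ _ _ assms(3)] by blast
qed

end
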